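(* Let $\epsilon>0$, $\delta\ge0$, $n\ge 1$, let $\mathscr X$ be a set, $T:\mathscr X^n\to\mathbb{R}$, and let $\{\mu_X: X\in\mathscr X^n\}$ be probability measures on $\mathbb{R}$, each absolutely continuous with respect to Lebesgue measure. Suppose $\mu_X$ depends on $X$ only through $T(X)$ and that the family has monotone likelihood ratio in $T(X)$. Then $\{\mu_X\}$ satisfies $(\epsilon,\delta)$-differential privacy if and only if for all $X_1,X_2\in\mathscr X^n$ with $\delta(X_1,X_2)=1$ and all $t\in\mathbb{R}$, $$\mu_{X_1}((-\infty,t))\le e^\epsilon\mu_{X_2}((-\infty,t))+\delta\quad\text{and}\quad \mu_{X_1}((t,\infty))\le e^\epsilon\mu_{X_2}((t,\infty))+\delta.$$
   Context: The Hamming distance on $\mathscr X^n$ is $\delta(X,X')=\#\{i:X_i\ne X'_i\}$. The family $\{\mu_X: X\in\mathscr X^n\}$ satisfies $(\epsilon,\delta)$-differential privacy if for every Borel $B\subseteq\mathbb{R}$ and all $X,X'$ with $\delta(X,X')=1$, $\mu_X(B)\le e^\epsilon\mu_{X'}(B)+\delta$. Monotone likelihood ratio in $T(X)$: writing $f_X$ for the Lebesgue density of $\mu_X$, whenever $T(X)>T(X')$ the ratio $f_X(t)/f_{X'}(t)$ is nondecreasing in $t$. *)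

theory Defs
  imports "HOL-Probability.Probability"
begin

definition tuples :: "'a set \<Rightarrow> nat \<Rightarrow> 'a list set" where
  "tuples Xs n = {X. length X = n \<and> set X \<subseteq> Xs}"

definition hamming :: "nat \<Rightarrow> 'a list \<Rightarrow> 'a list \<Rightarrow> nat" where
  "hamming n X X' = card {i. i < n \<and> X ! i \<noteq> X' ! i}"

definition diff_private ::
  "'a set \<Rightarrow> nat \<Rightarrow> ('a list \<Rightarrow> real measure) \<Rightarrow> real \<Rightarrow> real \<Rightarrow> bool" where
  "diff_private Xs n \<mu> \<epsilon> \<delta> \<longleftrightarrow>
     (\<forall>X\<in>tuples Xs n. \<forall>X'\<in>tuples Xs n. hamming n X X' = 1 \<longrightarrow>
        (\<forall>B\<in>sets borel. measure (\<mu> X) B \<le> exp \<epsilon> * measure (\<mu> X') B + \<delta>))"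

text \<open>Monotone likelihood ratio in T, for the Lebesgue densities f X of mu X:
  whenever T X > T X', the ratio f X t / f X' t is nondecreasing in t
  (stated in cross-multiplied form, to handle vanishing denominators).\<close>
definition mlr ::
  "'a set \<Rightarrow> nat \<Rightarrow> ('a list \<Rightarrow> real) \<Rightarrow> ('a list \<Rightarrow> real \<Rightarrow> real) \<Rightarrow> bool" where
  "mlr Xs n T f \<longleftrightarrow>
     (\<forall>X\<in>tuples Xs n. \<forall>X'\<in>tuples Xs n. T X > T X' \<longrightarrow>
        (\<forall>s t. s \<le> t \<longrightarrow> f X s * f X' t \<le> f X t * f X' s))"

end

theory Submission
  imports Defs
begin

text \<open>For densities \<open>f\<close>, \<open>g\<close> and \<open>c = exp \<epsilon>\<close>, the excess \<open>\<mu>(B) - c \<nu>(B) = \<integral>\<^sub>B (f - c g)\<close> is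
  largest when \<open>B\<close> is the set where \<open>f > c g\<close> (the Neyman--Pearson argument). A monotone likelihood
  ratio makes this set a ray, up to its endpoint, which is a null set. Hence the privacy inequality
  for all Borel sets follows from the one for rays. When \<open>T X\<^sub>1 = T X\<^sub>2\<close> the two measures
  coincide and there is nothing to prove.\<close>

lemma measure_density_real_eq_integral:
  fixes f :: "'a \<Rightarrow> real"
  assumes [measurable]: "f \<in> borel_measurable M" "S \<in> sets M"
    and nonneg: "AE x in M. 0 \<le> f x" and finite: "finite_measure (density M f)"
  shows "integrable M (\<lambda>x. f x * indicator S x)"
    and "measure (density M f) S = (\<integral>x. f x * indicator S x \<partial>M)"
proof -
  have "integrable (density M f) (indicator S :: 'a \<Rightarrow> real)"
    using finite_measure.emeasure_finite[OF finite]
    by (intro integrable_real_indicator) (auto simp: less_top)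
  then show "integrable M (\<lambda>x. f x * indicator S x)"
    using nonneg by (simp add: integrable_real_density)
  have "measure (density M f) S = integral\<^sup>L (density M f) (indicator S)"
    by (simp add: integral_indicator sets.Int_space_eq2)
  also have "\<dots> = (\<integral>x. f x * indicator S x \<partial>M)"
    using nonneg by (intro integral_real_density) auto
  finally show "measure (density M f) S = (\<integral>x. f x * indicator S x \<partial>M)" .
qed

lemma measure_density_diff_le:
  fixes f g :: "'a \<Rightarrow> real" and c :: real
  assumes [measurable]: "f \<in> borel_measurable M" "g \<in> borel_measurable M" "A \<in> sets M" "B \<in> sets M"
    and nonneg: "AE x in M. 0 \<le> f x" "AE x in M. 0 \<le> g x"
    and finite: "finite_measure (density M f)" "finite_measure (density M g)"
    and inside: "AE x in M. x \<in> A \<longrightarrow> c * g x \<le> f x"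
    and outside: "AE x in M. x \<notin> A \<longrightarrow> f x \<le> c * g x"
  shows "measure (density M f) B - c * measure (density M g) B
       \<le> measure (density M f) A - c * measure (density M g) A"
proof -
  have diff_eq: "measure (density M f) S - c * measure (density M g) S
      = (\<integral>x. indicator S x * (f x - c * g x) \<partial>M)"
    and diff_integrable: "integrable M (\<lambda>x. indicator S x * (f x - c * g x))"
    if [measurable]: "S \<in> sets M" for S
    using measure_density_real_eq_integral[of f M S] measure_density_real_eq_integral[of g M S]
      nonneg finite
    by (auto simp: algebra_simps)
  have "AE x in M. indicator B x * (f x - c * g x) \<le> indicator A x * (f x - c * g x)"
    using inside outside by eventually_elim (auto simp: indicator_def)
  then show ?thesis
    by (simp add: diff_eq diff_integrable integral_mono_AE)
qed

definition open_ray :: "real set \<Rightarrow> bool" where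
  "open_ray A \<longleftrightarrow> A = {} \<or> A = UNIV \<or> (\<exists>t. A = {t<..}) \<or> (\<exists>t. A = {..<t})"

lemma open_ray_borel: "open_ray A \<Longrightarrow> A \<in> sets borel"
  by (auto simp: open_ray_def)

lemma open_ray_uminus: "open_ray A \<Longrightarrow> open_ray (uminus ` A)"
  unfolding open_ray_def by (elim disjE exE) auto

lemma upward_closed_open_ray:
  fixes S U :: "real set"
  assumes up: "\<And>s t. s \<in> S \<Longrightarrow> s \<le> t \<Longrightarrow> t \<in> U"
  obtains A z where "open_ray A" "A \<subseteq> U" "S \<subseteq> insert z A"
proof (cases "S = {}")
  case True
  then show ?thesis using that[of "{}"] by (simp add: open_ray_def)
next
  case nonempty: False
  show ?thesis
  proof (cases "bdd_below S")
    case False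
    then have "UNIV \<subseteq> U"
      using up by (meson bdd_below_def nle_le subsetI)
    then show ?thesis using that[of UNIV] by (simp add: open_ray_def)
  next
    case True
    have "{Inf S<..} \<subseteq> U"
      using up cInf_less_iff[OF nonempty True] by (auto intro: less_imp_le)
    moreover have "S \<subseteq> insert (Inf S) {Inf S<..}"
      using cInf_lower[OF _ True] by force
    ultimately show ?thesis using that[of "{Inf S<..}"] by (auto simp: open_ray_def)
  qed
qed

lemma downward_closed_open_ray:
  fixes S U :: "real set"
  assumes down: "\<And>s t. s \<in> S \<Longrightarrow> t \<le> s \<Longrightarrow> t \<in> U"
  obtains A z where "open_ray A" "A \<subseteq> U" "S \<subseteq> insert z A"
proof -
  have "t \<in> uminus ` U" if "s \<in> uminus ` S" "s \<le> t" for s t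
  proof -
    have "- t \<in> U" using that down[of "- s" "- t"] by auto
    then show ?thesis by (rule rev_image_eqI) simp
  qed
  then obtain A z where ray: "open_ray A" and sub: "A \<subseteq> uminus ` U"
      and cover: "uminus ` S \<subseteq> insert z A"
    by (rule upward_closed_open_ray)
  show ?thesis
  proof (rule that)
    show "open_ray (uminus ` A)" using ray by (rule open_ray_uminus)
    show "uminus ` A \<subseteq> U" using sub by auto
    show "S \<subseteq> insert (- z) (uminus ` A)"
    proof
      fix s assume "s \<in> S"
      then have "- s \<in> insert z A" using cover by blast
      then show "s \<in> insert (- z) (uminus ` A)" by (auto intro: rev_image_eqI[of "- s"])
    qed
  qed
qed

lemma open_ray_measure_le:
  fixes M N :: "real measure"
  assumes "prob_space M" "prob_space N" "space M = UNIV" "space N = UNIV"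
    and "c \<ge> 1" "\<delta> \<ge> 0"
    and rays: "\<And>t. measure M {..<t} \<le> c * measure N {..<t} + \<delta>
                   \<and> measure M {t<..} \<le> c * measure N {t<..} + \<delta>"
    and "open_ray A"
  shows "measure M A \<le> c * measure N A + \<delta>"
proof -
  have "measure M UNIV = 1" "measure N UNIV = 1"
    using assms(1-4) prob_space.prob_space by metis+
  then show ?thesis
    using \<open>open_ray A\<close> rays \<open>c \<ge> 1\<close> \<open>\<delta> \<ge> 0\<close> unfolding open_ray_def by auto
qed

lemma ratio_above_threshold_mono:
  fixes c p q u v :: real
  assumes cross: "p * v \<le> q * u" and above: "c * u < p"
    and "0 \<le> u" "0 \<le> v" "0 \<le> q"
  shows "c * v \<le> q"
proof (cases "u = 0")
  case True
  then have "p * v \<le> 0" "0 < p" using cross above by auto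
  then have "v = 0" using \<open>0 \<le> v\<close> by (simp add: mult_le_0_iff)
  then show ?thesis using \<open>0 \<le> q\<close> by simp
next
  case False
  then have "0 < u" using \<open>0 \<le> u\<close> by simp
  have "c * v * u = c * u * v" by simp
  also have "\<dots> \<le> p * v" using above \<open>0 \<le> v\<close> by (intro mult_right_mono) auto
  also have "\<dots> \<le> q * u" by (rule cross)
  finally show ?thesis using \<open>0 < u\<close> by simp
qed

lemma density_measure_le_of_monotone_ratio:
  fixes f g :: "real \<Rightarrow> real" and c \<delta> :: real
  assumes [measurable]: "f \<in> borel_measurable borel" "g \<in> borel_measurable borel"
    and f_nonneg: "\<And>t. 0 \<le> f t" and g_nonneg: "\<And>t. 0 \<le> g t"
    and prob: "prob_space (density lborel f)" "prob_space (density lborel g)"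
    and "c \<ge> 1" "\<delta> \<ge> 0"
    and ratio: "(\<forall>s t. s \<le> t \<longrightarrow> f s * g t \<le> f t * g s)
              \<or> (\<forall>s t. s \<le> t \<longrightarrow> f t * g s \<le> f s * g t)"
    and rays: "\<And>t. measure (density lborel f) {..<t} \<le> c * measure (density lborel g) {..<t} + \<delta>
                   \<and> measure (density lborel f) {t<..} \<le> c * measure (density lborel g) {t<..} + \<delta>"
    and B: "B \<in> sets borel"
  shows "measure (density lborel f) B \<le> c * measure (density lborel g) B + \<delta>"
proof -
  let ?above = "{x. c * g x < f x}" and ?weakly_above = "{x. c * g x \<le> f x}"
  have propagate: "t \<in> ?weakly_above" if "s \<in> ?above" "f s * g t \<le> f t * g s" for s t
    using ratio_above_threshold_mono[of "f s" "g t" "f t" "g s" c] that f_nonneg g_nonneg by auto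
  obtain A z where A: "open_ray A" "A \<subseteq> ?weakly_above" "?above \<subseteq> insert z A"
    using ratio
  proof
    assume "\<forall>s t. s \<le> t \<longrightarrow> f s * g t \<le> f t * g s"
    then show thesis
      using upward_closed_open_ray[of ?above ?weakly_above] propagate that by blast
  next
    assume "\<forall>s t. s \<le> t \<longrightarrow> f t * g s \<le> f s * g t"
    then show thesis
      using downward_closed_open_ray[of ?above ?weakly_above] propagate that by blast
  qed
  have [measurable]: "A \<in> sets borel" using A(1) by (rule open_ray_borel)
  have "AE x in lborel. x \<notin> A \<longrightarrow> f x \<le> c * g x"
    using AE_lborel_singleton[of z] by eventually_elim (use A(3) in \<open>force simp: not_less\<close>)
  then have "measure (density lborel f) B - c * measure (density lborel g) B
      \<le> measure (density lborel f) A - c * measure (density lborel g) A"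
    using A(2) f_nonneg g_nonneg prob B
    by (intro measure_density_diff_le) (auto intro: prob_space.finite_measure)
  moreover have "measure (density lborel f) A \<le> c * measure (density lborel g) A + \<delta>"
    using prob A(1) rays \<open>c \<ge> 1\<close> \<open>\<delta> \<ge> 0\<close> by (intro open_ray_measure_le) auto
  ultimately show ?thesis by simp
qed

lemma mlr_monotone_ratio:
  assumes "mlr Xs n T f" "X1 \<in> tuples Xs n" "X2 \<in> tuples Xs n" "T X1 \<noteq> T X2"
  shows "(\<forall>s t. s \<le> t \<longrightarrow> f X1 s * f X2 t \<le> f X1 t * f X2 s)
       \<or> (\<forall>s t. s \<le> t \<longrightarrow> f X1 t * f X2 s \<le> f X1 s * f X2 t)"
  using assms unfolding mlr_def by (metis linorder_neqE_linordered_idom mult.commute)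

theorem lemma6:
  fixes Xs :: "'a set" and n :: nat and T :: "'a list \<Rightarrow> real"
    and \<mu> :: "'a list \<Rightarrow> real measure" and \<epsilon> \<delta> :: real
  assumes eps: "\<epsilon> > 0" and del: "\<delta> \<ge> 0" and n: "n \<ge> 1"
    and prob: "\<And>X. X \<in> tuples Xs n \<Longrightarrow> prob_space (\<mu> X)"
    and sets: "\<And>X. X \<in> tuples Xs n \<Longrightarrow> sets (\<mu> X) = sets borel"
    and ac: "\<And>X. X \<in> tuples Xs n \<Longrightarrow> absolutely_continuous lborel (\<mu> X)"
    and dep: "\<And>X X'. X \<in> tuples Xs n \<Longrightarrow> X' \<in> tuples Xs n \<Longrightarrow> T X = T X' \<Longrightarrow> \<mu> X = \<mu> X'"
    and dens: "\<exists>f. (\<forall>X\<in>tuples Xs n. f X \<in> borel_measurable borel \<and> (\<forall>t. f X t \<ge> 0)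
                    \<and> \<mu> X = density lborel (\<lambda>t. ennreal (f X t)))
                 \<and> mlr Xs n T f"
  shows "diff_private Xs n \<mu> \<epsilon> \<delta> \<longleftrightarrow>
    (\<forall>X1\<in>tuples Xs n. \<forall>X2\<in>tuples Xs n. hamming n X1 X2 = 1 \<longrightarrow>
       (\<forall>t. measure (\<mu> X1) {..<t} \<le> exp \<epsilon> * measure (\<mu> X2) {..<t} + \<delta>
          \<and> measure (\<mu> X1) {t<..} \<le> exp \<epsilon> * measure (\<mu> X2) {t<..} + \<delta>))"
proof -
  obtain f where f: "\<And>X. X \<in> tuples Xs n \<Longrightarrow> f X \<in> borel_measurable borel \<and> (\<forall>t. f X t \<ge> 0)
                      \<and> \<mu> X = density lborel (\<lambda>t. ennreal (f X t))"
    and mlr: "mlr Xs n T f"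
    using dens by blast
  have "exp \<epsilon> \<ge> 1" using eps by simp
  have bound_from_rays: "measure (\<mu> X1) B \<le> exp \<epsilon> * measure (\<mu> X2) B + \<delta>"
    if X: "X1 \<in> tuples Xs n" "X2 \<in> tuples Xs n" and B: "B \<in> sets borel"
      and rays: "\<forall>t. measure (\<mu> X1) {..<t} \<le> exp \<epsilon> * measure (\<mu> X2) {..<t} + \<delta>
                   \<and> measure (\<mu> X1) {t<..} \<le> exp \<epsilon> * measure (\<mu> X2) {t<..} + \<delta>"
    for X1 X2 B
  proof (cases "T X1 = T X2")
    case True
    then have "\<mu> X1 = \<mu> X2" using dep X by blast
    then show ?thesis
      using \<open>exp \<epsilon> \<ge> 1\<close> del mult_right_mono[of 1 "exp \<epsilon>" "measure (\<mu> X2) B"] by simp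
  next
    case False
    have f1: "f X1 \<in> borel_measurable borel" "\<And>t. f X1 t \<ge> 0"
      and \<mu>1: "\<mu> X1 = density lborel (f X1)" using f[OF X(1)] by auto
    have f2: "f X2 \<in> borel_measurable borel" "\<And>t. f X2 t \<ge> 0"
      and \<mu>2: "\<mu> X2 = density lborel (f X2)" using f[OF X(2)] by auto
    have "prob_space (density lborel (f X1))" "prob_space (density lborel (f X2))"
      using prob[OF X(1)] prob[OF X(2)] \<mu>1 \<mu>2 by simp_all
    then show ?thesis
      unfolding \<mu>1 \<mu>2
      by (rule density_measure_le_of_monotone_ratio[OF f1(1) f2(1) f1(2) f2(2) _ _
            \<open>exp \<epsilon> \<ge> 1\<close> del mlr_monotone_ratio[OF mlr X False] _ B])
        (use rays in \<open>simp add: \<mu>1 \<mu>2\<close>)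
  qed
  show ?thesis
    unfolding diff_private_def by (auto intro: bound_from_rays)
qed

end
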